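(* Let $\rho,T>0$ and $\theta=0$, and for each $N\ge2$ let $\tilde\Gamma,\bm\nu,\bm\omega$ be as in the context. Then along even $N\uparrow\infty$, $$\bm\nu^\top\tilde\Gamma\bm\nu\to\frac{2e^{6\rho T}(3\rho T+5)+e^{3\rho T}+3\rho T+7}{54e^{6\rho T}+27},\quad \bm\omega^\top(\tilde\Gamma-\tilde\Gamma^\top)\bm\nu\to\frac{4e^{6\rho T}-6e^{5\rho T}+e^{3\rho T}-3e^{-\rho T}+4}{6e^{6\rho T}+3},\quad \bm\omega^\top\tilde\Gamma\bm\omega\to e^{-\rho T}+\rho T+1,$$ and along odd $N\uparrow\infty$, $$\bm\nu^\top\tilde\Gamma\bm\nu\to\frac{2e^{6\rho T}(3\rho T+5)-3e^{3\rho T}-3\rho T-7}{54e^{6\rho T}-27},\quad \bm\omega^\top(\tilde\Gamma-\tilde\Gamma^\top)\bm\nu\to\frac{-4e^{6\rho T}-6e^{5\rho T}+3e^{3\rho T}+3e^{-\rho T}+4}{-6e^{6\rho T}+3},\quad \bm\omega^\top\tilde\Gamma\bm\omega\to-e^{-\rho T}+\rho T+1.$$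
   Context: For $N\ge2$ let $\tilde\Gamma$ be the $(N+1)\times(N+1)$ lower triangular matrix with $\tilde\Gamma_{ij}=0$ for $i<j$, $\tilde\Gamma_{ii}=1/2$, $\tilde\Gamma_{ij}=e^{-\rho(i-j)T/N}$ for $i>j$; $\Gamma:=\tilde\Gamma+\tilde\Gamma^\top$; $\bm\nu:=(\Gamma+\tilde\Gamma)^{-1}\mathbf1$ and $\bm\omega:=(\Gamma-\tilde\Gamma)^{-1}\mathbf1$ (the case $\theta=0$ of $(\Gamma\pm\tilde\Gamma+2\theta\mathrm{Id})^{-1}\mathbf1$), with $\mathbf1$ the all-ones vector; all depend on $N$. *)

theory Defs
  imports "HOL-Analysis.Analysis" "Jordan_Normal_Form.Matrix"
begin

definition GammaT :: "real \<Rightarrow> real \<Rightarrow> nat \<Rightarrow> real mat" where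
  "GammaT rho T N = mat (N+1) (N+1) (\<lambda>(i,j).
     if i < j then 0 else if i = j then 1/2
     else exp (- rho * real (i - j) * T / real N))"

definition Gamma :: "real \<Rightarrow> real \<Rightarrow> nat \<Rightarrow> real mat" where
  "Gamma rho T N = GammaT rho T N + transpose_mat (GammaT rho T N)"

definition mat_inv :: "real mat \<Rightarrow> real mat" where
  "mat_inv A = (THE B. B \<in> carrier_mat (dim_row A) (dim_row A) \<and>
                    A * B = 1\<^sub>m (dim_row A) \<and> B * A = 1\<^sub>m (dim_row A))"

definition nu_vec :: "real \<Rightarrow> real \<Rightarrow> nat \<Rightarrow> real vec" where
  "nu_vec rho T N = mat_inv (Gamma rho T N + GammaT rho T N) *\<^sub>v vec (N+1) (\<lambda>_. 1)"

definition omega_vec :: "real \<Rightarrow> real \<Rightarrow> nat \<Rightarrow> real vec" where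
  "omega_vec rho T N = mat_inv (Gamma rho T N - GammaT rho T N) *\<^sub>v vec (N+1) (\<lambda>_. 1)"

end

theory Submission
  imports Defs "Jordan_Normal_Form.Determinant" "HOL-Real_Asymp.Real_Asymp"
begin

(* With a = exp (-rho T / N), GammaT acts on f by f i/2 + (sum j<i. a^(i-j) f j), and its quadratic
   form is ((1 - a^2) * (sum i. (S i + f i)^2) + S (N+1)^2) / 2 > 0 for the partial sums S. Hence
   Gamma + GammaT = 2 GammaT + GammaT^T and Gamma - GammaT = GammaT^T are invertible, and nu, omega are
   found explicitly as combinations of geometric sequences: omega j = c0 + c1 (-1/a)^j, and
   nu j = A0 + A1 r^j + A2 (-1/r)^j with r the positive root of z^2 = 3 (1 - a^2)/a * z + 1.
   Solving 2 GammaT nu + GammaT^T nu = 1 and GammaT^T omega = 1 turns the three forms into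
   (sum nu)/3, 3 (sum nu) - (sum omega) and sum omega. These sums are explicit in N, a, r^(N+1) and
   (-1)^N; as a -> 1 one has N (1 - a) -> rho T and r^(N+1) -> exp (3 rho T), while the sign
   (-1)^N survives, so the limits exist separately along even and odd N. *)

lemma mat_inv_mult_vec_eqI:
  fixes A :: "real mat"
  assumes A: "A \<in> carrier_mat n n"
    and inj: "\<And>v. v \<in> carrier_vec n \<Longrightarrow> A *\<^sub>v v = 0\<^sub>v n \<Longrightarrow> v = 0\<^sub>v n"
    and w: "w \<in> carrier_vec n" and Aw: "A *\<^sub>v w = b"
  shows "mat_inv A *\<^sub>v b = w"
proof -
  have "det A \<noteq> 0" using det_0_iff_vec_prod_zero_field[OF A] inj by auto
  from det_non_zero_imp_unit[OF A this] obtain B where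
    B: "B \<in> carrier_mat n n" "B * A = 1\<^sub>m n" "A * B = 1\<^sub>m n"
    unfolding Units_def ring_mat_def by auto
  have "mat_inv A = B"
    unfolding mat_inv_def carrier_matD(1)[OF A]
  proof (rule the_equality)
    fix C assume C: "C \<in> carrier_mat n n \<and> A * C = 1\<^sub>m n \<and> C * A = 1\<^sub>m n"
    then have "C = C * (A * B)" using B by (metis right_mult_one_mat)
    also have "\<dots> = (C * A) * B" using A B C by (metis assoc_mult_mat)
    finally show "C = B" using C B by simp
  qed (use B in auto)
  then show ?thesis using A B w Aw by (metis assoc_mult_mat_vec one_mult_mat_vec)
qed

lemma scalar_prod_transpose_mult_vec:
  fixes A :: "'a :: comm_semiring_0 mat"
  assumes "A \<in> carrier_mat n n" "v \<in> carrier_vec n" "w \<in> carrier_vec n"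
  shows "w \<bullet> (transpose_mat A *\<^sub>v v) = v \<bullet> (A *\<^sub>v w)"
proof -
  have "w \<bullet> (transpose_mat A *\<^sub>v v) = (transpose_mat A *\<^sub>v v) \<bullet> w"
    using assms by (intro comm_scalar_prod[of _ n]) auto
  also have "\<dots> = v \<bullet> (A *\<^sub>v w)"
    by (rule transpose_vec_mult_scalar[OF assms(1,3,2)])
  finally show ?thesis .
qed

lemma quadratic_form_of_solution:
  fixes A :: "'a :: comm_ring_1 mat"
  assumes A: "A \<in> carrier_mat n n" and v: "v \<in> carrier_vec n"
    and eq: "(A + transpose_mat A + A) *\<^sub>v v = b"
  shows "3 * (v \<bullet> (A *\<^sub>v v)) = v \<bullet> b"
proof -
  have "b = A *\<^sub>v v + (transpose_mat A *\<^sub>v v + A *\<^sub>v v)"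
    using A v eq by (simp add: add_mult_distrib_mat_vec[of _ n n])
  then have "v \<bullet> b = v \<bullet> (A *\<^sub>v v) + v \<bullet> (transpose_mat A *\<^sub>v v) + v \<bullet> (A *\<^sub>v v)"
    using A v by (simp add: scalar_prod_add_distrib[of _ n])
  also have "v \<bullet> (transpose_mat A *\<^sub>v v) = v \<bullet> (A *\<^sub>v v)"
    by (rule scalar_prod_transpose_mult_vec[OF A v v])
  finally show ?thesis by (simp add: algebra_simps)
qed

lemma quadratic_form_of_transpose_solution:
  fixes A :: "'a :: comm_ring_1 mat"
  assumes A: "A \<in> carrier_mat n n" and w: "w \<in> carrier_vec n"
    and eq: "transpose_mat A *\<^sub>v w = c"
  shows "w \<bullet> (A *\<^sub>v w) = w \<bullet> c"
  using scalar_prod_transpose_mult_vec[OF A w w] eq by simp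

lemma skew_form_of_solutions:
  fixes A :: "'a :: comm_ring_1 mat"
  assumes A: "A \<in> carrier_mat n n" and v: "v \<in> carrier_vec n" and w: "w \<in> carrier_vec n"
    and eq_v: "(A + transpose_mat A + A) *\<^sub>v v = b" and eq_w: "transpose_mat A *\<^sub>v w = c"
  shows "w \<bullet> ((A - transpose_mat A) *\<^sub>v v) = 3 * (v \<bullet> c) - w \<bullet> b"
proof -
  have At: "transpose_mat A \<in> carrier_mat n n" using A by simp
  have Av: "w \<bullet> (A *\<^sub>v v) = v \<bullet> c"
    using scalar_prod_transpose_mult_vec[OF A w v] eq_w by simp
  have "b = A *\<^sub>v v + (transpose_mat A *\<^sub>v v + A *\<^sub>v v)"
    using A v eq_v by (simp add: add_mult_distrib_mat_vec[of _ n n])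
  then have "w \<bullet> b = 2 * (w \<bullet> (A *\<^sub>v v)) + w \<bullet> (transpose_mat A *\<^sub>v v)"
    using A v w by (simp add: scalar_prod_add_distrib[of _ n] algebra_simps)
  moreover have "w \<bullet> ((A - transpose_mat A) *\<^sub>v v) = w \<bullet> (A *\<^sub>v v) - w \<bullet> (transpose_mat A *\<^sub>v v)"
    using A At v w by (simp add: minus_mult_distrib_mat_vec scalar_prod_minus_distrib[of _ n])
  ultimately show ?thesis using Av by (simp add: algebra_simps)
qed

section \<open>The kernel matrix as a convolution\<close>

definition decay :: "real \<Rightarrow> nat \<Rightarrow> real" where
  "decay x N = exp (- x / real N)"

definition kernel_low :: "real \<Rightarrow> (nat \<Rightarrow> real) \<Rightarrow> nat \<Rightarrow> real" where
  "kernel_low a f i = (\<Sum>j<i. a^(i-j) * f j) + f i / 2"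

definition kernel_up :: "real \<Rightarrow> nat \<Rightarrow> (nat \<Rightarrow> real) \<Rightarrow> nat \<Rightarrow> real" where
  "kernel_up a N f i = (\<Sum>j\<in>{i<..N}. a^(j-i) * f j) + f i / 2"

lemma decay_pos: "0 < decay x N"
  by (simp add: decay_def)

lemma decay_less_one: "x > 0 \<Longrightarrow> N > 0 \<Longrightarrow> decay x N < 1"
  by (simp add: decay_def)

lemma decay_power: "N > 0 \<Longrightarrow> decay x N ^ N = exp (- x)"
  by (simp add: decay_def flip: exp_of_nat_mult)

lemma GammaT_carrier: "GammaT rho T N \<in> carrier_mat (N+1) (N+1)"
  by (simp add: GammaT_def)

lemma GammaT_entry:
  assumes "i \<le> N" "j \<le> N"
  shows "GammaT rho T N $$ (i,j) =
    (if i < j then 0 else if i = j then 1/2 else decay (rho*T) N ^ (i-j))"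
proof -
  have "exp (- rho * real (i - j) * T / real N) = decay (rho*T) N ^ (i-j)"
    unfolding decay_def by (simp add: field_simps flip: exp_of_nat_mult)
  then show ?thesis using assms by (auto simp: GammaT_def of_nat_diff)
qed

lemma sum_split_at:
  fixes i N :: nat
  assumes "i \<le> N"
  shows "(\<Sum>j\<in>{0..<N+1}. g j) = (\<Sum>j<i. g j) + g i + (\<Sum>j\<in>{i<..N}. g j)"
proof -
  have "{0..<N+1} = {..<i} \<union> {i} \<union> {i<..N}" using assms by auto
  then have "(\<Sum>j\<in>{0..<N+1}. g j) = (\<Sum>j\<in>{..<i} \<union> {i} \<union> {i<..N}. g j)" by simp
  also have "\<dots> = (\<Sum>j<i. g j) + g i + (\<Sum>j\<in>{i<..N}. g j)"
    by (subst sum.union_disjoint; auto simp: ac_simps)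
  finally show ?thesis .
qed

lemma GammaT_mult_vec:
  "GammaT rho T N *\<^sub>v vec (N+1) f = vec (N+1) (kernel_low (decay (rho*T) N) f)"
proof (rule eq_vecI)
  fix i assume "i < dim_vec (vec (N+1) (kernel_low (decay (rho*T) N) f))"
  then have i: "i \<le> N" by simp
  let ?g = "\<lambda>j. GammaT rho T N $$ (i,j) * f j"
  have "(GammaT rho T N *\<^sub>v vec (N+1) f) $ i = (\<Sum>j\<in>{0..<N+1}. ?g j)"
    using i by (simp add: GammaT_def scalar_prod_def)
  also have "\<dots> = (\<Sum>j<i. ?g j) + ?g i + (\<Sum>j\<in>{i<..N}. ?g j)"
    by (rule sum_split_at[OF i])
  also have "\<dots> = kernel_low (decay (rho*T) N) f i"
    using i unfolding kernel_low_def by (auto simp: GammaT_entry intro!: sum.cong)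
  finally show "(GammaT rho T N *\<^sub>v vec (N+1) f) $ i = vec (N+1) (kernel_low (decay (rho*T) N) f) $ i"
    using i by simp
qed (simp add: GammaT_def)

lemma transpose_GammaT_mult_vec:
  "transpose_mat (GammaT rho T N) *\<^sub>v vec (N+1) f = vec (N+1) (kernel_up (decay (rho*T) N) N f)"
proof (rule eq_vecI)
  fix i assume "i < dim_vec (vec (N+1) (kernel_up (decay (rho*T) N) N f))"
  then have i: "i \<le> N" by simp
  let ?g = "\<lambda>j. GammaT rho T N $$ (j,i) * f j"
  have "(transpose_mat (GammaT rho T N) *\<^sub>v vec (N+1) f) $ i = (\<Sum>j\<in>{0..<N+1}. ?g j)"
    using i by (simp add: GammaT_def scalar_prod_def)
  also have "\<dots> = (\<Sum>j<i. ?g j) + ?g i + (\<Sum>j\<in>{i<..N}. ?g j)"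
    by (rule sum_split_at[OF i])
  also have "\<dots> = kernel_up (decay (rho*T) N) N f i"
    using i unfolding kernel_up_def by (auto simp: GammaT_entry intro!: sum.cong)
  finally show "(transpose_mat (GammaT rho T N) *\<^sub>v vec (N+1) f) $ i = vec (N+1) (kernel_up (decay (rho*T) N) N f) $ i"
    using i by simp
qed (simp add: GammaT_def)

section \<open>Positivity of the kernel\<close>

lemma sum_pow_diff_Suc:
  fixes a :: "'a :: comm_ring_1"
  shows "(\<Sum>j<Suc i. a^(Suc i - j) * f j) = a * ((\<Sum>j<i. a^(i-j) * f j) + f i)"
proof -
  have "(\<Sum>j<i. a^(Suc i - j) * f j) = (\<Sum>j<i. a * (a^(i-j) * f j))"
    by (intro sum.cong) (auto simp: Suc_diff_le)
  then show ?thesis by (simp add: sum_distrib_left algebra_simps)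
qed

text \<open>Summation by parts: with \<open>S i = \<Sum>j<i. a^(i-j) * f j\<close> one has \<open>S (i+1) = a (S i + f i)\<close>, so
  \<open>f i (S i + f i/2) = ((S i + f i)^2 - S i^2)/2\<close> telescopes against \<open>a^2 (S i + f i)^2 = S (i+1)^2\<close>.\<close>
lemma kernel_low_quadratic_form:
  fixes a :: real and f :: "nat \<Rightarrow> real"
  defines "S \<equiv> \<lambda>i. \<Sum>j<i. a^(i-j) * f j"
  shows "(\<Sum>i<m. f i * kernel_low a f i) = ((1 - a^2) * (\<Sum>i<m. (S i + f i)^2) + (S m)^2) / 2"
proof (induction m)
  case (Suc m)
  have "S (Suc m) = a * (S m + f m)" unfolding S_def by (rule sum_pow_diff_Suc)
  moreover have "kernel_low a f m = S m + f m / 2" by (simp add: kernel_low_def S_def)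
  ultimately show ?case using Suc by (simp add: algebra_simps power2_eq_square)
qed (simp add: S_def)

lemma kernel_low_quadratic_form_pos:
  fixes a :: real
  assumes a: "\<bar>a\<bar> < 1" and "i < m" "f i \<noteq> 0"
  shows "(\<Sum>i<m. f i * kernel_low a f i) > 0"
proof -
  define S where "S \<equiv> \<lambda>i. \<Sum>j<i. a^(i-j) * f j"
  define k where "k = (LEAST k. f k \<noteq> 0)"
  have fk: "f k \<noteq> 0"
    unfolding k_def by (rule LeastI[of "\<lambda>k. f k \<noteq> 0", OF \<open>f i \<noteq> 0\<close>])
  have "k \<le> i"
    unfolding k_def by (rule Least_le) (fact \<open>f i \<noteq> 0\<close>)
  then have "k < m" using \<open>i < m\<close> by simp
  have "S k = 0"
    unfolding S_def k_def by (intro sum.neutral) (auto dest: not_less_Least)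
  have a2: "0 < 1 - a^2" using a by (simp add: abs_square_less_1)
  have "(S k + f k)^2 \<le> (\<Sum>i<m. (S i + f i)^2)"
    using \<open>k < m\<close> by (intro member_le_sum) auto
  then have "(1 - a^2) * (f k)^2 \<le> (1 - a^2) * (\<Sum>i<m. (S i + f i)^2)"
    using \<open>S k = 0\<close> a2 by simp
  moreover have "0 < (1 - a^2) * (f k)^2" using a2 fk by simp
  ultimately have "0 < (1 - a^2) * (\<Sum>i<m. (S i + f i)^2) + (S m)^2"
    by (simp add: add_pos_nonneg)
  then show ?thesis
    unfolding kernel_low_quadratic_form S_def by simp
qed

lemma GammaT_quadratic_form_pos:
  assumes "rho > 0" "T > 0" "N > 0"
    and v: "v \<in> carrier_vec (N+1)" "v \<noteq> 0\<^sub>v (N+1)"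
  shows "v \<bullet> (GammaT rho T N *\<^sub>v v) > 0"
proof -
  let ?a = "decay (rho*T) N" and ?f = "\<lambda>i. v $ i"
  obtain i where i: "i < N+1" "v $ i \<noteq> 0"
  proof (rule ccontr)
    assume "\<not> thesis"
    then have "v = 0\<^sub>v (N+1)" using v(1) that by (intro eq_vecI) auto
    with v(2) show False ..
  qed
  have "v = vec (N+1) ?f" using v by auto
  then have "GammaT rho T N *\<^sub>v v = vec (N+1) (kernel_low ?a ?f)"
    by (metis GammaT_mult_vec)
  then have "v \<bullet> (GammaT rho T N *\<^sub>v v) = (\<Sum>i<N+1. v $ i * kernel_low ?a ?f i)"
    by (simp add: scalar_prod_def atLeast0LessThan)
  also have "\<dots> > 0"
    using assms i decay_pos decay_less_one by (intro kernel_low_quadratic_form_pos) (auto simp: abs_of_pos)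
  finally show ?thesis .
qed

lemma injective_of_quadratic_form_pos:
  fixes A :: "real mat"
  assumes A: "A \<in> carrier_mat n n"
    and pos: "\<And>v. v \<in> carrier_vec n \<Longrightarrow> v \<noteq> 0\<^sub>v n \<Longrightarrow> v \<bullet> (A *\<^sub>v v) > 0"
    and v: "v \<in> carrier_vec n"
  shows "(A + transpose_mat A + A) *\<^sub>v v = 0\<^sub>v n \<Longrightarrow> v = 0\<^sub>v n"
    and "transpose_mat A *\<^sub>v v = 0\<^sub>v n \<Longrightarrow> v = 0\<^sub>v n"
proof -
  have zero: "v \<bullet> 0\<^sub>v n = 0" using v by simp
  show "(A + transpose_mat A + A) *\<^sub>v v = 0\<^sub>v n \<Longrightarrow> v = 0\<^sub>v n"
    using quadratic_form_of_solution[OF A v] pos[OF v] zero by fastforce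
  show "transpose_mat A *\<^sub>v v = 0\<^sub>v n \<Longrightarrow> v = 0\<^sub>v n"
    using quadratic_form_of_transpose_solution[OF A v] pos[OF v] zero by fastforce
qed

section \<open>Geometric modes and the characteristic roots\<close>

lemma kernel_low_add: "kernel_low a (\<lambda>j. f j + g j) i = kernel_low a f i + kernel_low a g i"
  by (simp add: kernel_low_def sum.distrib algebra_simps)

lemma kernel_low_scale: "kernel_low a (\<lambda>j. c * f j) i = c * kernel_low a f i"
  by (simp add: kernel_low_def sum_distrib_left algebra_simps)

lemma kernel_up_add: "kernel_up a N (\<lambda>j. f j + g j) i = kernel_up a N f i + kernel_up a N g i"
  by (simp add: kernel_up_def sum.distrib algebra_simps)

lemma kernel_up_scale: "kernel_up a N (\<lambda>j. c * f j) i = c * kernel_up a N f i"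
  by (simp add: kernel_up_def sum_distrib_left algebra_simps)

lemma sum_pow_diff_power:
  fixes a z :: real
  assumes "z \<noteq> a"
  shows "(\<Sum>j<i. a^(i-j) * z^j) = a * (z^i - a^i) / (z - a)"
proof (induction i)
  case (Suc i)
  have "(\<Sum>j<Suc i. a^(Suc i - j) * z^j) = a * ((\<Sum>j<i. a^(i-j) * z^j) + z^i)"
    by (rule sum_pow_diff_Suc)
  also have "\<dots> = a * (a * (z^i - a^i) / (z - a) + z^i)"
    using Suc by simp
  also have "\<dots> = a * (z^Suc i - a^Suc i) / (z - a)"
    using assms by (simp add: field_simps)
  finally show ?case .
qed simp

lemma sum_pow_diff_power_upper:
  fixes a z :: real
  assumes "a * z \<noteq> 1" "i \<le> N"
  shows "(\<Sum>j\<in>{i<..N}. a^(j-i) * z^j) = (a * z^(i+1) - a^(N-i+1) * z^(N+1)) / (1 - a*z)"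
  using assms(2)
proof (induction N)
  case (Suc N)
  show ?case
  proof (cases "i = Suc N")
    case False
    then have i: "i \<le> N" using Suc.prems by simp
    have "{i<..Suc N} = insert (Suc N) {i<..N}" using i by auto
    moreover have "a^(Suc N - i) = a^(N-i+1)" using i by (simp add: Suc_diff_le)
    ultimately have "(\<Sum>j\<in>{i<..Suc N}. a^(j-i) * z^j) = a^(N-i+1) * z^(N+1) + (\<Sum>j\<in>{i<..N}. a^(j-i) * z^j)"
      by simp
    also have "\<dots> = a^(N-i+1) * z^(N+1) + (a * z^(i+1) - a^(N-i+1) * z^(N+1)) / (1 - a*z)"
      using Suc.IH i by simp
    also have "\<dots> = (a * z^(i+1) - a^(Suc N-i+1) * z^(Suc N+1)) / (1 - a*z)"
      using i assms(1) by (simp add: Suc_diff_le field_simps)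
    finally show ?thesis .
  qed simp
qed simp

definition low_symbol :: "real \<Rightarrow> real \<Rightarrow> real" where
  "low_symbol a z = a / (z - a) + 1/2"

definition up_symbol :: "real \<Rightarrow> real \<Rightarrow> real" where
  "up_symbol a z = a * z / (1 - a * z) + 1/2"

lemma kernel_low_power:
  assumes "z \<noteq> a"
  shows "kernel_low a (\<lambda>j. z^j) i = z^i * low_symbol a z - a^(i+1) / (z - a)"
  unfolding kernel_low_def sum_pow_diff_power[OF assms] low_symbol_def
  using assms by (simp add: algebra_simps diff_divide_distrib add_divide_distrib)

lemma kernel_up_power:
  assumes "a * z \<noteq> 1" "i \<le> N"
  shows "kernel_up a N (\<lambda>j. z^j) i = z^i * up_symbol a z - a^(N-i+1) * z^(N+1) / (1 - a * z)"
  unfolding kernel_up_def sum_pow_diff_power_upper[OF assms] up_symbol_def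
  using assms by (simp add: algebra_simps diff_divide_distrib add_divide_distrib)

definition nu_symbol :: "real \<Rightarrow> real \<Rightarrow> real" where
  "nu_symbol a z = 2 * low_symbol a z + up_symbol a z"

definition boundary_gain :: "real \<Rightarrow> nat \<Rightarrow> real \<Rightarrow> real" where
  "boundary_gain a N z = (z - a) * z^(N+1) / (1 - a * z)"

lemma kernel_nu_mode:
  assumes "z \<noteq> a" "a * z \<noteq> 1" "i \<le> N"
  shows "2 * kernel_low a (\<lambda>j. (z - a) * z^j) i + kernel_up a N (\<lambda>j. (z - a) * z^j) i
       = (z - a) * z^i * nu_symbol a z - 2 * a^(i+1) - a^(N-i+1) * boundary_gain a N z"
proof -
  have "(z - a) * (a^(i+1) / (z - a)) = a^(i+1)" using assms(1) by simp
  then show ?thesis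
    unfolding kernel_low_scale kernel_up_scale kernel_low_power[OF assms(1)]
      kernel_up_power[OF assms(2,3)] nu_symbol_def boundary_gain_def
    by (simp add: algebra_simps)
qed

definition char_coeff :: "real \<Rightarrow> real" where
  "char_coeff a = 3 * (1 - a^2) / a"

definition char_root :: "real \<Rightarrow> real" where
  "char_root a = (char_coeff a + sqrt ((char_coeff a)^2 + 4)) / 2"

lemma char_root_pos: "0 < char_root a"
proof -
  have "\<bar>char_coeff a\<bar> < sqrt ((char_coeff a)^2 + 4)"
    using real_sqrt_less_mono[of "(char_coeff a)^2" "(char_coeff a)^2 + 4"] by simp
  then have "0 < char_coeff a + sqrt ((char_coeff a)^2 + 4)"
    using abs_ge_minus_self[of "char_coeff a"] by linarith
  then show ?thesis unfolding char_root_def by simp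
qed

lemma char_root_eq: "char_root a ^ 2 = char_coeff a * char_root a + 1"
proof -
  have "sqrt ((char_coeff a)^2 + 4) ^ 2 = (char_coeff a)^2 + 4" by simp
  then show ?thesis unfolding char_root_def by (simp add: field_simps power2_eq_square)
qed

lemma char_root_minus_inverse: "char_root a - 1 / char_root a = char_coeff a"
  using char_root_eq[of a] char_root_pos[of a] by (simp add: field_simps power2_eq_square)

lemma char_root_other_eq: "(-1 / char_root a)^2 = char_coeff a * (-1 / char_root a) + 1"
  using char_root_pos[of a] unfolding char_root_minus_inverse[symmetric]
  by (simp add: field_simps power2_eq_square)

lemma one_less_char_root:
  assumes "0 < a" "a < 1"
  shows "1 < char_root a"
proof -
  have "0 < char_coeff a" using assms by (simp add: char_coeff_def power_less_one_iff)
  moreover have "2 < sqrt ((char_coeff a)^2 + 4)"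
    using \<open>0 < char_coeff a\<close> real_less_rsqrt[of 2] by simp
  ultimately show ?thesis unfolding char_root_def by simp
qed

lemma one_less_mult_char_root:
  assumes "0 < a" "a < 1"
  shows "1 < a * char_root a"
proof -
  let ?r = "char_root a"
  have r: "1 < ?r" by (rule one_less_char_root[OF assms])
  text \<open>\<open>1/a\<close> lies strictly between the roots \<open>-1/r < 0 < r\<close> of \<open>z^2 - c z - 1\<close>.\<close>
  have "(1/a - ?r) * (1/a + 1/?r) = (1/a)^2 - char_coeff a * (1/a) - 1"
    using r assms unfolding char_root_minus_inverse[symmetric] by (simp add: field_simps power2_eq_square)
  also have "\<dots> = (2 * a^2 - 2) / a^2"
    using assms by (simp add: char_coeff_def field_simps power2_eq_square)
  also have "\<dots> < 0"
    using assms by (simp add: divide_neg_pos power_less_one_iff)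
  finally have "(1/a - ?r) * (1/a + 1/?r) < 0" .
  moreover have "0 < 1/a + 1/?r" using assms r by (intro add_pos_pos) simp_all
  ultimately have "1/a < ?r" by (simp add: mult_less_0_iff)
  then show ?thesis using assms by (simp add: field_simps)
qed

lemma nu_symbol_root:
  assumes "0 < a" "z \<noteq> a" "a * z \<noteq> 1" "z^2 = char_coeff a * z + 1"
  shows "nu_symbol a z = 0"
proof -
  have "a * z^2 = 3 * (1 - a^2) * z + a"
    using assms(1,4) by (simp add: char_coeff_def field_simps)
  then show ?thesis
    using assms(2,3) unfolding nu_symbol_def low_symbol_def up_symbol_def
    by (simp add: field_simps power2_eq_square) algebra
qed

lemma nu_symbol_one:
  assumes "a \<noteq> 1"
  shows "nu_symbol a 1 = 3 * (1 + a) / (2 * (1 - a))"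
proof -
  have "nu_symbol a 1 = 3 * (a / (1 - a)) + 3/2"
    by (simp add: nu_symbol_def low_symbol_def up_symbol_def)
  also have "\<dots> = 3 * (1 + a) / (2 * (1 - a))"
    using assms by (simp add: field_simps)
  finally show ?thesis .
qed

lemma up_symbol_one: "a \<noteq> 1 \<Longrightarrow> up_symbol a 1 = (1 + a) / (2 * (1 - a))"
  by (simp add: up_symbol_def field_simps)

lemma boundary_gain_one: "a \<noteq> 1 \<Longrightarrow> boundary_gain a N 1 = 1"
  by (simp add: boundary_gain_def)

lemma boundary_gain_char_root_less:
  assumes "0 < a" "a < 1"
  shows "boundary_gain a N (char_root a) < -1"
proof -
  let ?r = "char_root a"
  have r: "1 < ?r" and ar: "1 < a * ?r"
    using one_less_char_root[OF assms] one_less_mult_char_root[OF assms] .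
  have "1 \<le> ?r^(N+1)" using r by (intro one_le_power) simp
  then have "?r - a \<le> (?r - a) * ?r^(N+1)"
    using mult_left_mono[of 1 "?r^(N+1)" "?r - a"] r assms by simp
  moreover have "a * ?r - 1 < ?r - a"
    using r assms by (smt (verit) mult_less_cancel_right2)
  ultimately have "-1 * (1 - a * ?r) < (?r - a) * ?r^(N+1)" by simp
  then show ?thesis unfolding boundary_gain_def using ar by (simp add: neg_divide_less_eq)
qed

lemma abs_boundary_gain_less:
  assumes "0 < a" "a < 1" "-1 < q" "q < 0"
  shows "\<bar>boundary_gain a N q\<bar> < 1"
proof -
  have "a * q < 0" using assms by (simp add: mult_pos_neg)
  then have d: "0 < 1 - a * q" by simp
  have n: "0 < a - q" using assms by simp
  have "\<bar>q\<bar>^(N+1) \<le> 1" using assms by (intro power_le_one) auto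
  then have "\<bar>q^(N+1)\<bar> \<le> 1" by (simp only: power_abs)
  then have "\<bar>boundary_gain a N q\<bar> \<le> (a - q) * 1 / (1 - a * q)"
    unfolding boundary_gain_def using d n
    by (simp add: abs_mult abs_divide divide_right_mono mult_left_mono)
  also have "\<dots> < 1"
  proof -
    have "0 < (1 - a) * (1 + q)" using assms by simp
    moreover have "(1 - a) * (1 + q) = (1 - a * q) - (a - q)" by (simp add: algebra_simps)
    ultimately show ?thesis using d by simp
  qed
  finally show ?thesis .
qed

lemma other_char_root_bounds:
  assumes "0 < a" "a < 1"
  shows "-1 < -1 / char_root a" "-1 / char_root a < 0"
  using one_less_char_root[OF assms] by (auto simp: field_simps)

lemma nu_symbol_char_roots:
  assumes "0 < a" "a < 1"
  shows "nu_symbol a (char_root a) = 0" "nu_symbol a (-1 / char_root a) = 0"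
proof -
  have "1 < char_root a" "1 < a * char_root a"
    using one_less_char_root[OF assms] one_less_mult_char_root[OF assms] .
  then show "nu_symbol a (char_root a) = 0"
    using assms by (intro nu_symbol_root[OF assms(1) _ _ char_root_eq]) auto
  have "-1 / char_root a < 0" using other_char_root_bounds[OF assms] by simp
  moreover have "a * (-1 / char_root a) < 0"
    using assms(1) other_char_root_bounds[OF assms] by (simp add: mult_pos_neg)
  ultimately show "nu_symbol a (-1 / char_root a) = 0"
    using assms by (intro nu_symbol_root[OF assms(1) _ _ char_root_other_eq]) linarith+
qed

lemma boundary_gains_ne:
  assumes "0 < a" "a < 1"
  shows "boundary_gain a N (char_root a) \<noteq> boundary_gain a N (-1 / char_root a)"
  using boundary_gain_char_root_less[OF assms, of N]
    abs_boundary_gain_less[OF assms other_char_root_bounds[OF assms], of N]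
  by auto

section \<open>Explicit solutions\<close>

text \<open>The constant mode and the modes \<open>r^j\<close>, \<open>q^j\<close> (with \<open>r\<close>, \<open>q = -1/r\<close> the roots of
  \<open>z^2 = c z + 1\<close>, where \<open>nu_symbol\<close> vanishes) leave only the boundary layers \<open>a^(i+1)\<close> and
  \<open>a^(N-i+1)\<close>; the two free coefficients are chosen to cancel both.\<close>
definition nu_explicit :: "real \<Rightarrow> nat \<Rightarrow> nat \<Rightarrow> real" where
  "nu_explicit a N j =
     (let r = char_root a; q = -1 / r; u = 2 / (3 * (1 + a));
          gr = boundary_gain a N r; gq = boundary_gain a N q
      in u * (1 - a) + u * (gq - 1) / (gr - gq) * ((r - a) * r^j)
           + u * (1 - gr) / (gr - gq) * ((q - a) * q^j))"

text \<open>\<open>up_symbol a (-1/a) = 0\<close>, so the mode \<open>(-1/a)^j\<close> only produces the boundary layer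
  \<open>a^(N-i+1)\<close>, which cancels that of the constant mode.\<close>
definition omega_explicit :: "real \<Rightarrow> nat \<Rightarrow> nat \<Rightarrow> real" where
  "omega_explicit a N j = 2 * (1 - a) / (1 + a) + 4 * a * (-a)^N / (1 + a) * (-1 / a)^j"

lemma nu_explicit_solves:
  assumes "0 < a" "a < 1" "i \<le> N"
  shows "2 * kernel_low a (nu_explicit a N) i + kernel_up a N (nu_explicit a N) i = 1"
proof -
  define r q u where "r = char_root a" and "q = -1 / r" and "u = 2 / (3 * (1 + a))"
  define gr gq where "gr = boundary_gain a N r" and "gq = boundary_gain a N q"
  define br bq where "br = u * (gq - 1) / (gr - gq)" and "bq = u * (1 - gr) / (gr - gq)"
  let ?K = "\<lambda>f. 2 * kernel_low a f i + kernel_up a N f i"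
  have r: "1 < r" "1 < a * r"
    using one_less_char_root[OF assms(1,2)] one_less_mult_char_root[OF assms(1,2)] by (auto simp: r_def)
  have q: "q < 0" "a * q < 0"
    using other_char_root_bounds[OF assms(1,2)] assms(1) by (auto simp: q_def r_def mult_pos_neg)
  have "gr - gq \<noteq> 0"
    using boundary_gains_ne[OF assms(1,2)] by (simp add: gr_def gq_def r_def q_def)
  then have coeffs: "u + br + bq = 0" "u + br * gr + bq * gq = 0"
    by (simp_all add: br_def bq_def field_simps)
  have "nu_symbol a r = 0" "nu_symbol a q = 0"
    unfolding q_def r_def using nu_symbol_char_roots[OF assms(1,2)] by auto
  moreover have "r \<noteq> a" "a * r \<noteq> 1" "q \<noteq> a" "a * q \<noteq> 1" using assms r q by auto
  ultimately have mode_r: "?K (\<lambda>j. (r - a) * r^j) = - 2 * a^(i+1) - a^(N-i+1) * gr"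
    and mode_q: "?K (\<lambda>j. (q - a) * q^j) = - 2 * a^(i+1) - a^(N-i+1) * gq"
    using kernel_nu_mode[of r a i N] kernel_nu_mode[of q a i N] assms(3) by (simp_all add: gr_def gq_def)
  have mode_1: "?K (\<lambda>j. (1 - a) * 1^j) = (1 - a) * nu_symbol a 1 - 2 * a^(i+1) - a^(N-i+1)"
    using kernel_nu_mode[of 1 a i N] assms by (simp add: boundary_gain_one)
  have "nu_explicit a N = (\<lambda>j. u * ((1 - a) * 1^j) + br * ((r - a) * r^j) + bq * ((q - a) * q^j))"
    by (simp add: fun_eq_iff nu_explicit_def Let_def r_def q_def u_def gr_def gq_def br_def bq_def)
  then have "?K (nu_explicit a N) =
      u * ?K (\<lambda>j. (1 - a) * 1^j) + br * ?K (\<lambda>j. (r - a) * r^j) + bq * ?K (\<lambda>j. (q - a) * q^j)"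
    by (simp only: kernel_low_add kernel_low_scale kernel_up_add kernel_up_scale) (simp add: algebra_simps)
  also have "\<dots> = u * (1 - a) * nu_symbol a 1
      - 2 * a^(i+1) * (u + br + bq) - a^(N-i+1) * (u + br * gr + bq * gq)"
    unfolding mode_1 mode_r mode_q by (simp add: algebra_simps)
  also have "\<dots> = u * (1 - a) * nu_symbol a 1"
    unfolding coeffs by simp
  also have "\<dots> = 1"
    using assms by (simp add: nu_symbol_one u_def)
  finally show ?thesis .
qed

lemma omega_mode_boundary:
  fixes a :: real
  assumes "0 < a"
  shows "4 * a * (-a)^N / (1 + a) * (-1 / a)^(N+1) = -4 / (1 + a)"
proof -
  define w where "w = -1 / a"
  have aw: "a * w = -1" using assms by (simp add: w_def)
  have "(-a)^N * w^N = 1"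
    using assms by (simp add: w_def flip: power_mult_distrib)
  then have "4 * a * (-a)^N / (1 + a) * w^(N+1) = 4 * (a * w) * ((-a)^N * w^N) / (1 + a)"
    by (simp add: algebra_simps)
  then show ?thesis using aw \<open>(-a)^N * w^N = 1\<close> by (simp add: w_def)
qed

lemma omega_explicit_solves:
  assumes "0 < a" "a < 1" "i \<le> N"
  shows "kernel_up a N (omega_explicit a N) i = 1"
proof -
  define w c0 c1 where "w = -1 / a" and "c0 = 2 * (1 - a) / (1 + a)" and "c1 = 4 * a * (-a)^N / (1 + a)"
  have aw: "a * w = -1" using assms by (simp add: w_def)
  have c1w: "c1 * w^(N+1) = -4 / (1 + a)"
    using omega_mode_boundary[OF assms(1)] by (simp add: c1_def w_def)
  have up_1: "kernel_up a N (\<lambda>j. 1^j) i = up_symbol a 1 - a^(N-i+1) / (1 - a)"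
    using kernel_up_power[of a 1 i N] assms by simp
  have "up_symbol a w = 0" using aw by (simp add: up_symbol_def)
  then have up_w: "kernel_up a N (\<lambda>j. w^j) i = - (a^(N-i+1) * w^(N+1) / 2)"
    using kernel_up_power[of a w i N] assms aw by simp
  have "omega_explicit a N = (\<lambda>j. c0 * 1^j + c1 * w^j)"
    by (simp add: fun_eq_iff omega_explicit_def w_def c0_def c1_def)
  then have "kernel_up a N (omega_explicit a N) i
      = c0 * kernel_up a N (\<lambda>j. 1^j) i + c1 * kernel_up a N (\<lambda>j. w^j) i"
    by (simp only: kernel_up_add kernel_up_scale)
  also have "\<dots> = c0 * up_symbol a 1 - a^(N-i+1) * (c0 / (1 - a) + c1 * w^(N+1) / 2)"
    unfolding up_1 up_w by (simp add: algebra_simps)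
  also have "\<dots> = 1"
  proof -
    have "c0 * up_symbol a 1 = 1"
      using assms by (simp add: c0_def up_symbol_one)
    moreover have "c0 / (1 - a) = 2 / (1 + a)"
      using assms unfolding c0_def
      by (metis divide_divide_eq_left mult.commute nonzero_mult_divide_mult_cancel_right
          times_divide_eq_right less_irrefl right_minus_eq)
    then have "c0 / (1 - a) + c1 * w^(N+1) / 2 = 0"
      unfolding c1w using assms by (simp add: field_simps)
    ultimately show ?thesis by simp
  qed
  finally show ?thesis .
qed

lemma Gamma_plus_GammaT_eq: "Gamma rho T N + GammaT rho T N
    = GammaT rho T N + transpose_mat (GammaT rho T N) + GammaT rho T N"
  by (simp add: Gamma_def)

lemma Gamma_minus_GammaT_eq: "Gamma rho T N - GammaT rho T N = transpose_mat (GammaT rho T N)"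
  by (rule eq_matI) (simp_all add: Gamma_def GammaT_def)

lemma Gamma_plus_GammaT_mult_vec:
  "(Gamma rho T N + GammaT rho T N) *\<^sub>v vec (N+1) f =
     vec (N+1) (\<lambda>i. 2 * kernel_low (decay (rho*T) N) f i + kernel_up (decay (rho*T) N) N f i)"
proof -
  let ?A = "GammaT rho T N" and ?v = "vec (N+1) f"
  have "(Gamma rho T N + ?A) *\<^sub>v ?v = ?A *\<^sub>v ?v + transpose_mat ?A *\<^sub>v ?v + ?A *\<^sub>v ?v"
    unfolding Gamma_plus_GammaT_eq using GammaT_carrier
    by (simp add: add_mult_distrib_mat_vec[of _ "N+1" "N+1"])
  then show ?thesis
    unfolding GammaT_mult_vec transpose_GammaT_mult_vec by (auto intro!: eq_vecI)
qed

lemma Gamma_plus_GammaT_nu_explicit: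
  assumes "rho > 0" "T > 0" "N > 0"
  shows "(Gamma rho T N + GammaT rho T N) *\<^sub>v vec (N+1) (nu_explicit (decay (rho*T) N) N)
           = vec (N+1) (\<lambda>_. 1)"
  unfolding Gamma_plus_GammaT_mult_vec using nu_explicit_solves decay_pos decay_less_one assms
  by (auto intro!: eq_vecI)

lemma transpose_GammaT_omega_explicit:
  assumes "rho > 0" "T > 0" "N > 0"
  shows "transpose_mat (GammaT rho T N) *\<^sub>v vec (N+1) (omega_explicit (decay (rho*T) N) N)
           = vec (N+1) (\<lambda>_. 1)"
  unfolding transpose_GammaT_mult_vec using omega_explicit_solves decay_pos decay_less_one assms
  by (auto intro!: eq_vecI)

lemma nu_vec_eq:
  assumes "rho > 0" "T > 0" "N > 0"
  shows "nu_vec rho T N = vec (N+1) (nu_explicit (decay (rho*T) N) N)"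
  unfolding nu_vec_def
proof (rule mat_inv_mult_vec_eqI[OF _ _ _ Gamma_plus_GammaT_nu_explicit[OF assms]])
  show "Gamma rho T N + GammaT rho T N \<in> carrier_mat (N+1) (N+1)"
    using GammaT_carrier by (simp add: Gamma_def)
  show "v = 0\<^sub>v (N+1)"
    if "v \<in> carrier_vec (N+1)" "(Gamma rho T N + GammaT rho T N) *\<^sub>v v = 0\<^sub>v (N+1)" for v
    using that injective_of_quadratic_form_pos(1)[OF GammaT_carrier GammaT_quadratic_form_pos[OF assms]]
    unfolding Gamma_plus_GammaT_eq by blast
qed simp

lemma omega_vec_eq:
  assumes "rho > 0" "T > 0" "N > 0"
  shows "omega_vec rho T N = vec (N+1) (omega_explicit (decay (rho*T) N) N)"
  unfolding omega_vec_def Gamma_minus_GammaT_eq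
proof (rule mat_inv_mult_vec_eqI[OF _ _ _ transpose_GammaT_omega_explicit[OF assms]])
  show "transpose_mat (GammaT rho T N) \<in> carrier_mat (N+1) (N+1)"
    using GammaT_carrier by simp
  show "v = 0\<^sub>v (N+1)"
    if "v \<in> carrier_vec (N+1)" "transpose_mat (GammaT rho T N) *\<^sub>v v = 0\<^sub>v (N+1)" for v
    using that injective_of_quadratic_form_pos(2)[OF GammaT_carrier GammaT_quadratic_form_pos[OF assms]]
    by blast
qed simp

lemma quadratic_forms_eq:
  assumes "rho > 0" "T > 0" "N > 0"
  defines "a \<equiv> decay (rho * T) N"
  shows "nu_vec rho T N \<bullet> (GammaT rho T N *\<^sub>v nu_vec rho T N) = (\<Sum>j\<le>N. nu_explicit a N j) / 3"
    and "omega_vec rho T N \<bullet> ((GammaT rho T N - transpose_mat (GammaT rho T N)) *\<^sub>v nu_vec rho T N)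
           = 3 * (\<Sum>j\<le>N. nu_explicit a N j) - (\<Sum>j\<le>N. omega_explicit a N j)"
    and "omega_vec rho T N \<bullet> (GammaT rho T N *\<^sub>v omega_vec rho T N) = (\<Sum>j\<le>N. omega_explicit a N j)"
proof -
  let ?A = "GammaT rho T N" and ?nu = "nu_vec rho T N" and ?om = "omega_vec rho T N"
  let ?one = "vec (N+1) (\<lambda>_. 1) :: real vec"
  have sums: "?nu \<bullet> ?one = (\<Sum>j\<le>N. nu_explicit a N j)" "?om \<bullet> ?one = (\<Sum>j\<le>N. omega_explicit a N j)"
    unfolding nu_vec_eq[OF assms(1-3)] omega_vec_eq[OF assms(1-3)] a_def
    by (simp_all add: scalar_prod_def atLeast0LessThan lessThan_Suc_atMost)
  have carrier: "?nu \<in> carrier_vec (N+1)" "?om \<in> carrier_vec (N+1)"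
    by (simp_all add: nu_vec_eq[OF assms(1-3)] omega_vec_eq[OF assms(1-3)])
  have eq_nu: "(?A + transpose_mat ?A + ?A) *\<^sub>v ?nu = ?one"
    unfolding nu_vec_eq[OF assms(1-3)] Gamma_plus_GammaT_eq[symmetric]
    by (rule Gamma_plus_GammaT_nu_explicit[OF assms(1-3)])
  have eq_om: "transpose_mat ?A *\<^sub>v ?om = ?one"
    unfolding omega_vec_eq[OF assms(1-3)] by (rule transpose_GammaT_omega_explicit[OF assms(1-3)])
  show "?nu \<bullet> (?A *\<^sub>v ?nu) = (\<Sum>j\<le>N. nu_explicit a N j) / 3"
    using quadratic_form_of_solution[OF GammaT_carrier carrier(1) eq_nu] sums by simp
  show "?om \<bullet> ((?A - transpose_mat ?A) *\<^sub>v ?nu)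
          = 3 * (\<Sum>j\<le>N. nu_explicit a N j) - (\<Sum>j\<le>N. omega_explicit a N j)"
    using skew_form_of_solutions[OF GammaT_carrier carrier eq_nu eq_om] sums by simp
  show "?om \<bullet> (?A *\<^sub>v ?om) = (\<Sum>j\<le>N. omega_explicit a N j)"
    using quadratic_form_of_transpose_solution[OF GammaT_carrier carrier(2) eq_om] sums by simp
qed

section \<open>Sums of the solutions and their limits\<close>

lemma omega_explicit_sum:
  fixes a :: real
  assumes "0 < a"
  shows "(\<Sum>j\<le>N. omega_explicit a N j) = 2 * ((real N + 1) * (1 - a)) / (1 + a)
     + (-4 / (1 + a) - 4 * a * (-a)^N / (1 + a)) / (-1 / a - 1)"
proof -
  let ?w = "-1 / a" and ?c = "4 * a * (-a)^N / (1 + a)"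
  have "?w \<noteq> 1" using assms by (simp add: field_simps)
  have "(\<Sum>j\<le>N. omega_explicit a N j) = (real N + 1) * (2 * (1 - a) / (1 + a)) + ?c * (\<Sum>j<N+1. ?w^j)"
    by (simp add: omega_explicit_def sum.distrib sum_distrib_left lessThan_Suc_atMost)
  also have "(\<Sum>j<N+1. ?w^j) = (?w^(N+1) - 1) / (?w - 1)"
    by (rule geometric_sum[OF \<open>?w \<noteq> 1\<close>])
  also have "?c * ((?w^(N+1) - 1) / (?w - 1)) = (-4 / (1 + a) - ?c) / (?w - 1)"
    using omega_mode_boundary[OF assms, of N] by (simp add: right_diff_distrib)
  finally show ?thesis by simp
qed

lemma nu_explicit_sum:
  fixes a :: real and N :: nat
  assumes "0 < a" "a < 1"
  defines "r \<equiv> char_root a" and "q \<equiv> -1 / char_root a" and "u \<equiv> 2 / (3 * (1 + a))"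
  defines "gr \<equiv> (r - a) / (1 - a * r) * r^(N+1)" and "gq \<equiv> (q - a) / (1 - a * q) * q^(N+1)"
  shows "(\<Sum>j\<le>N. nu_explicit a N j) = u * ((real N + 1) * (1 - a))
        + u * (gq - 1) / (gr - gq) * ((r - a) / (r - 1)) * (r^(N+1) - 1)
        + u * (1 - gr) / (gr - gq) * ((q - a) / (q - 1)) * (q^(N+1) - 1)"
proof -
  have "r \<noteq> 1" using one_less_char_root[OF assms(1,2)] by (simp add: r_def)
  have "q < 0" using char_root_pos[of a] by (simp add: q_def)
  then have "q \<noteq> 1" by simp
  have gains: "boundary_gain a N r = gr" "boundary_gain a N q = gq"
    by (simp_all add: boundary_gain_def gr_def gq_def)
  have geom: "(\<Sum>j\<le>N. (z - a) * z^j) = (z - a) / (z - 1) * (z^(N+1) - 1)" if "z \<noteq> 1" for z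
    using geometric_sum[OF that, of "N+1"] by (simp add: lessThan_Suc_atMost flip: sum_distrib_left)
  have "(\<Sum>j\<le>N. nu_explicit a N j) = (\<Sum>j\<le>N. u * (1 - a))
        + u * (gq - 1) / (gr - gq) * (\<Sum>j\<le>N. (r - a) * r^j)
        + u * (1 - gr) / (gr - gq) * (\<Sum>j\<le>N. (q - a) * q^j)"
    unfolding nu_explicit_def Let_def q_def[symmetric] unfolding r_def[symmetric] u_def[symmetric] gains
    by (simp add: sum.distrib sum_distrib_left)
  then show ?thesis
    using geom[OF \<open>r \<noteq> 1\<close>] geom[OF \<open>q \<noteq> 1\<close>] by (simp add: mult_ac)
qed

lemma decay_tendsto: "(decay x \<longlongrightarrow> 1) sequentially"
  unfolding decay_def by real_asymp

lemma decay_deficit_tendsto: "((\<lambda>N. (real N + 1) * (1 - decay x N)) \<longlongrightarrow> x) sequentially"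
  unfolding decay_def by real_asymp

lemma omega_sum_tendsto:
  assumes "F \<le> sequentially" "\<forall>\<^sub>F N in F. (- 1)^N = \<sigma>"
  shows "((\<lambda>N. \<Sum>j\<le>N. omega_explicit (decay x N) N j) \<longlongrightarrow> x + 1 + \<sigma> * exp (-x)) F"
proof -
  let ?a = "decay x"
  have "\<forall>\<^sub>F N in F. 0 < N"
    using filter_leD[OF assms(1) eventually_gt_at_top] .
  with assms(2) have ev: "\<forall>\<^sub>F N in F. 2 * ((real N + 1) * (1 - ?a N)) / (1 + ?a N)
        + (-4 / (1 + ?a N) - 4 * ?a N * (\<sigma> * exp (-x)) / (1 + ?a N)) / (-1 / ?a N - 1)
      = (\<Sum>j\<le>N. omega_explicit (?a N) N j)"
    by eventually_elim (simp add: omega_explicit_sum decay_pos power_minus' decay_power)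
  have lim: "((\<lambda>N. 2 * ((real N + 1) * (1 - ?a N)) / (1 + ?a N)
        + (-4 / (1 + ?a N) - 4 * ?a N * (\<sigma> * exp (-x)) / (1 + ?a N)) / (-1 / ?a N - 1))
      \<longlongrightarrow> 2 * x / (1 + 1) + (-4 / (1 + 1) - 4 * 1 * (\<sigma> * exp (-x)) / (1 + 1)) / (-1 / 1 - 1)) F"
    using tendsto_mono[OF assms(1) decay_tendsto] tendsto_mono[OF assms(1) decay_deficit_tendsto]
    by (intro tendsto_intros) simp_all
  have val: "2 * x / (1 + 1) + (-4 / (1 + 1) - 4 * 1 * (\<sigma> * exp (-x)) / (1 + 1)) / (-1 / 1 - 1)
      = x + 1 + \<sigma> * exp (-x)"
    by (simp add: field_simps)
  show ?thesis
    using Lim_transform_eventually[OF lim ev] unfolding val .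
qed

lemma char_root_decay_tendsto: "x > 0 \<Longrightarrow> ((\<lambda>N. char_root (decay x N)) \<longlongrightarrow> 1) sequentially"
  unfolding char_root_def char_coeff_def decay_def by real_asymp

lemma char_root_decay_power_tendsto:
  assumes "x > 0"
  shows "((\<lambda>N. char_root (decay x N) ^ (N+1)) \<longlongrightarrow> exp (3 * x)) sequentially"
proof -
  have "char_root (decay x N) powr (real N + 1) = char_root (decay x N) ^ (N+1)" for N
  proof -
    have "real N + 1 = real (N+1)" by simp
    then show ?thesis by (simp only: powr_realpow[OF char_root_pos])
  qed
  moreover have "((\<lambda>N. char_root (decay x N) powr (real N + 1)) \<longlongrightarrow> exp (3 * x)) sequentially"
    using assms unfolding char_root_def char_coeff_def decay_def by real_asymp
  ultimately show ?thesis by simp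
qed

lemma char_root_decay_ratios_tendsto:
  assumes "x > 0"
  shows "((\<lambda>N. (char_root (decay x N) - decay x N) / (char_root (decay x N) - 1)) \<longlongrightarrow> 4/3) sequentially"
    and "((\<lambda>N. (char_root (decay x N) - decay x N) / (1 - decay x N * char_root (decay x N))) \<longlongrightarrow> -2) sequentially"
  using assms unfolding char_root_def char_coeff_def decay_def by real_asymp+

lemma nu_limit_value:
  fixes E s x :: real
  assumes "1 < E" "s = 1 \<or> s = -1"
  defines "Z \<equiv> -2 * E - (- 1) * (s / E)"
  shows "1/3 * x + 1/3 * (-1 * (s / E) - 1) / Z * (4/3) * (E - 1)
     + 1/3 * (1 - (- 2) * E) / Z * 1 * (s / E - 1)
     = x/3 + (2 * s * E + 7 * s - 10 * E^2 + E) / (9 * (s - 2 * E^2))"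
proof -
  have "E \<noteq> 0" using assms(1) by simp
  then have ZE: "Z * E = s - 2 * E^2" by (simp add: Z_def field_simps power2_eq_square)
  have "1 < E * E" using assms(1) less_1_mult by fastforce
  then have "s - 2 * E^2 \<noteq> 0" using assms(2) by (auto simp: power2_eq_square)
  then have "Z \<noteq> 0" using ZE by auto
  then show ?thesis unfolding ZE[symmetric] using \<open>E \<noteq> 0\<close> by (simp add: field_simps power2_eq_square)
qed

definition nu_sum_limit :: "real \<Rightarrow> real \<Rightarrow> real" where
  "nu_sum_limit x s = x / 3 + (2 * s * exp (3 * x) + 7 * s - 10 * exp (3 * x)^2 + exp (3 * x))
                              / (9 * (s - 2 * exp (3 * x)^2))"

lemma nu_sum_tendsto:
  assumes "x > 0" "F \<le> sequentially" "\<forall>\<^sub>F N in F. (-1)^(N+1) = s" "s = 1 \<or> s = -1"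
  shows "((\<lambda>N. \<Sum>j\<le>N. nu_explicit (decay x N) N j) \<longlongrightarrow> nu_sum_limit x s) F"
proof -
  define E where "E = exp (3 * x)"
  define a where "a = decay x"
  define r where "r = (\<lambda>N. char_root (a N))"
  define q where "q = (\<lambda>N. -1 / r N)"
  define R where "R = (\<lambda>N. r N ^ (N+1))"
  have "1 < E" using assms(1) by (simp add: E_def)
  have lim_a: "(a \<longlongrightarrow> 1) F" and lim_m: "((\<lambda>N. (real N + 1) * (1 - a N)) \<longlongrightarrow> x) F"
    and lim_r: "(r \<longlongrightarrow> 1) F" and lim_R: "(R \<longlongrightarrow> E) F"
    and lim_P1: "((\<lambda>N. (r N - a N) / (r N - 1)) \<longlongrightarrow> 4/3) F"
    and lim_P2: "((\<lambda>N. (r N - a N) / (1 - a N * r N)) \<longlongrightarrow> -2) F"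
    using tendsto_mono[OF assms(2) decay_tendsto] tendsto_mono[OF assms(2) decay_deficit_tendsto]
      tendsto_mono[OF assms(2) char_root_decay_tendsto[OF assms(1)]]
      tendsto_mono[OF assms(2) char_root_decay_power_tendsto[OF assms(1)]]
      tendsto_mono[OF assms(2) char_root_decay_ratios_tendsto(1)[OF assms(1)]]
      tendsto_mono[OF assms(2) char_root_decay_ratios_tendsto(2)[OF assms(1)]]
    by (simp_all add: a_def r_def R_def E_def)
  have lim_q: "(q \<longlongrightarrow> -1) F"
    unfolding q_def using lim_r by (auto intro!: tendsto_eq_intros)
  have lim_QA: "((\<lambda>N. (q N - a N) / (1 - a N * q N)) \<longlongrightarrow> -1) F"
    and lim_QB: "((\<lambda>N. (q N - a N) / (q N - 1)) \<longlongrightarrow> 1) F"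
    using lim_a lim_q by (auto intro!: tendsto_eq_intros)
  define u where "u = (\<lambda>N. 2 / (3 * (1 + a N)))"
  define gr where "gr = (\<lambda>N. (r N - a N) / (1 - a N * r N) * R N)"
  define gq where "gq = (\<lambda>N. (q N - a N) / (1 - a N * q N) * (s / R N))"
  define closed where "closed = (\<lambda>N. u N * ((real N + 1) * (1 - a N))
      + u N * (gq N - 1) / (gr N - gq N) * ((r N - a N) / (r N - 1)) * (R N - 1)
      + u N * (1 - gr N) / (gr N - gq N) * ((q N - a N) / (q N - 1)) * (s / R N - 1))"
  have lim_u: "(u \<longlongrightarrow> 1/3) F"
    unfolding u_def using lim_a by (auto intro!: tendsto_eq_intros)
  have "\<forall>\<^sub>F N in F. 0 < N"
    using filter_leD[OF assms(2) eventually_gt_at_top] .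
  with assms(3) have ev: "\<forall>\<^sub>F N in F. closed N = (\<Sum>j\<le>N. nu_explicit (decay x N) N j)"
  proof eventually_elim
    case (elim N)
    have "q N ^ (N+1) = (-1)^(N+1) / R N" unfolding q_def R_def by (rule power_divide)
    with elim have "q N ^ (N+1) = s / R N" by simp
    moreover have "0 < a N" "a N < 1" using assms(1) elim by (simp_all add: a_def decay_pos decay_less_one)
    ultimately show ?case
      using nu_explicit_sum[of "a N" N] by (simp add: closed_def u_def gr_def gq_def r_def q_def R_def a_def)
  qed
  have lim: "(closed \<longlongrightarrow> 1/3 * x + 1/3 * (-1 * (s / E) - 1) / (-2 * E - (- 1) * (s / E)) * (4/3) * (E - 1)
        + 1/3 * (1 - (- 2) * E) / (-2 * E - (- 1) * (s / E)) * 1 * (s / E - 1)) F"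
  proof -
    have "1 < E * E" using \<open>1 < E\<close> less_1_mult by fastforce
    moreover have "E \<noteq> 0" using \<open>1 < E\<close> by simp
    ultimately have "-2 * E - (- 1) * (s / E) \<noteq> 0"
      using assms(4) by (auto simp: field_simps)
    with \<open>E \<noteq> 0\<close> show ?thesis
      unfolding closed_def gr_def gq_def
      by (intro lim_u lim_m lim_QA lim_QB lim_P1 lim_P2 lim_R tendsto_intros) simp_all
  qed
  show ?thesis
    unfolding nu_sum_limit_def E_def[symmetric] nu_limit_value[OF \<open>1 < E\<close> assms(4), symmetric]
    by (rule Lim_transform_eventually[OF lim ev])
qed

lemma quadratic_forms_tendsto:
  assumes "rho > 0" "T > 0" "F \<le> sequentially" "\<forall>\<^sub>F N in F. (-1)^N = \<sigma>" "\<sigma> = 1 \<or> \<sigma> = -1"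
  defines "x \<equiv> rho * T"
  shows "((\<lambda>N. nu_vec rho T N \<bullet> (GammaT rho T N *\<^sub>v nu_vec rho T N))
           \<longlongrightarrow> nu_sum_limit x (- \<sigma>) / 3) F"
    and "((\<lambda>N. omega_vec rho T N \<bullet> ((GammaT rho T N - transpose_mat (GammaT rho T N)) *\<^sub>v nu_vec rho T N))
           \<longlongrightarrow> 3 * nu_sum_limit x (- \<sigma>) - (x + 1 + \<sigma> * exp (-x))) F"
    and "((\<lambda>N. omega_vec rho T N \<bullet> (GammaT rho T N *\<^sub>v omega_vec rho T N))
           \<longlongrightarrow> x + 1 + \<sigma> * exp (-x)) F"
proof -
  have "x > 0" using assms(1,2) by (simp add: x_def)
  have pos: "\<forall>\<^sub>F N in F. 0 < N"
    using filter_leD[OF assms(3) eventually_gt_at_top] .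
  have "\<forall>\<^sub>F N in F. (-1)^(N+1) = - \<sigma>" using assms(4) by eventually_elim simp
  moreover have "- \<sigma> = 1 \<or> - \<sigma> = -1" using assms(5) by auto
  ultimately have lim_nu: "((\<lambda>N. \<Sum>j\<le>N. nu_explicit (decay x N) N j) \<longlongrightarrow> nu_sum_limit x (- \<sigma>)) F"
    by (rule nu_sum_tendsto[OF \<open>x > 0\<close> assms(3)])
  have lim_om: "((\<lambda>N. \<Sum>j\<le>N. omega_explicit (decay x N) N j) \<longlongrightarrow> x + 1 + \<sigma> * exp (-x)) F"
    by (rule omega_sum_tendsto[OF assms(3,4)])
  note forms = quadratic_forms_eq[OF assms(1,2), folded x_def]
  have "((\<lambda>N. (\<Sum>j\<le>N. nu_explicit (decay x N) N j) / 3) \<longlongrightarrow> nu_sum_limit x (- \<sigma>) / 3) F"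
    by (intro tendsto_divide lim_nu tendsto_const) simp
  then show "((\<lambda>N. nu_vec rho T N \<bullet> (GammaT rho T N *\<^sub>v nu_vec rho T N))
      \<longlongrightarrow> nu_sum_limit x (- \<sigma>) / 3) F"
    by (rule Lim_transform_eventually[OF _ eventually_mono[OF pos]]) (simp add: forms(1))
  have "((\<lambda>N. 3 * (\<Sum>j\<le>N. nu_explicit (decay x N) N j) - (\<Sum>j\<le>N. omega_explicit (decay x N) N j))
      \<longlongrightarrow> 3 * nu_sum_limit x (- \<sigma>) - (x + 1 + \<sigma> * exp (-x))) F"
    by (intro tendsto_diff tendsto_mult lim_nu lim_om tendsto_const)
  then show "((\<lambda>N. omega_vec rho T N \<bullet> ((GammaT rho T N - transpose_mat (GammaT rho T N)) *\<^sub>v nu_vec rho T N))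
      \<longlongrightarrow> 3 * nu_sum_limit x (- \<sigma>) - (x + 1 + \<sigma> * exp (-x))) F"
    by (rule Lim_transform_eventually[OF _ eventually_mono[OF pos]]) (simp add: forms(2))
  show "((\<lambda>N. omega_vec rho T N \<bullet> (GammaT rho T N *\<^sub>v omega_vec rho T N)) \<longlongrightarrow> x + 1 + \<sigma> * exp (-x)) F"
    by (rule Lim_transform_eventually[OF lim_om eventually_mono[OF pos]]) (simp add: forms(3))
qed

lemma tendsto_parity_subseq:
  assumes lim: "\<And>F \<sigma>. F \<le> sequentially \<Longrightarrow> (\<forall>\<^sub>F N in F. (-1::real)^N = \<sigma>) \<Longrightarrow> \<sigma> = 1 \<or> \<sigma> = -1
                 \<Longrightarrow> (f \<longlongrightarrow> L \<sigma>) F"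
  shows "((\<lambda>k. f (2*k+2)) \<longlongrightarrow> L 1) sequentially"
    and "((\<lambda>k. f (2*k+3)) \<longlongrightarrow> L (-1)) sequentially"
proof -
  have le: "filtermap g sequentially \<le> sequentially" if "strict_mono g" for g :: "nat \<Rightarrow> nat"
    using filterlim_subseq[OF that] unfolding filterlim_def .
  have "(f \<longlongrightarrow> L 1) (filtermap (\<lambda>k. 2*k+2) sequentially)"
    by (rule lim) (auto simp: le strict_mono_def eventually_filtermap)
  then show "((\<lambda>k. f (2*k+2)) \<longlongrightarrow> L 1) sequentially"
    by (simp add: filterlim_filtermap)
  have "(f \<longlongrightarrow> L (-1)) (filtermap (\<lambda>k. 2*k+3) sequentially)"
    by (rule lim) (auto simp: le strict_mono_def eventually_filtermap)
  then show "((\<lambda>k. f (2*k+3)) \<longlongrightarrow> L (-1)) sequentially"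
    by (simp add: filterlim_filtermap)
qed

lemma nu_sum_limit_values:
  fixes x :: real
  assumes "x > 0"
  shows "nu_sum_limit x (- 1) / 3
           = (2 * exp (6*x) * (3*x + 5) + exp (3*x) + 3*x + 7) / (54 * exp (6*x) + 27)"
    and "3 * nu_sum_limit x (- 1) - (x + 1 + 1 * exp (-x))
           = (4 * exp (6*x) - 6 * exp (5*x) + exp (3*x) - 3 * exp (-x) + 4) / (6 * exp (6*x) + 3)"
    and "nu_sum_limit x (- (- 1)) / 3
           = (2 * exp (6*x) * (3*x + 5) - 3 * exp (3*x) - 3*x - 7) / (54 * exp (6*x) - 27)"
    and "3 * nu_sum_limit x (- (- 1)) - (x + 1 + (- 1) * exp (-x))
           = (- 4 * exp (6*x) - 6 * exp (5*x) + 3 * exp (3*x) + 3 * exp (-x) + 4) / (- 6 * exp (6*x) + 3)"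
proof -
  define E where "E = exp (3 * x)"
  have "1 < E" using assms by (simp add: E_def)
  then have "1 < E^2" by (simp add: one_less_power)
  have e6: "exp (6*x) = E^2" by (simp add: E_def power2_eq_square flip: exp_add)
  have e5: "exp (5*x) = E^2 * exp (-x)" by (simp add: E_def power2_eq_square flip: exp_add)
  have den: "1 + 2 * E^2 \<noteq> 0" "2 * E^2 - 1 \<noteq> 0" using \<open>1 < E^2\<close> by auto
  show "nu_sum_limit x (- 1) / 3
           = (2 * exp (6*x) * (3*x + 5) + exp (3*x) + 3*x + 7) / (54 * exp (6*x) + 27)"
    using den unfolding nu_sum_limit_def e6 E_def[symmetric] by (simp add: field_simps)
  show "3 * nu_sum_limit x (- 1) - (x + 1 + 1 * exp (-x))
           = (4 * exp (6*x) - 6 * exp (5*x) + exp (3*x) - 3 * exp (-x) + 4) / (6 * exp (6*x) + 3)"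
    using den unfolding nu_sum_limit_def e6 e5 E_def[symmetric] by (simp add: field_simps)
  show "nu_sum_limit x (- (- 1)) / 3
           = (2 * exp (6*x) * (3*x + 5) - 3 * exp (3*x) - 3*x - 7) / (54 * exp (6*x) - 27)"
    using den unfolding nu_sum_limit_def e6 E_def[symmetric] by (simp add: field_simps)
  show "3 * nu_sum_limit x (- (- 1)) - (x + 1 + (- 1) * exp (-x))
           = (- 4 * exp (6*x) - 6 * exp (5*x) + 3 * exp (3*x) + 3 * exp (-x) + 4) / (- 6 * exp (6*x) + 3)"
    using den unfolding nu_sum_limit_def e6 e5 E_def[symmetric] by (simp add: field_simps)
qed

theorem lemmaA6:
  fixes rho T :: real
  assumes "rho > 0" and "T > 0"
  defines "nu \<equiv> nu_vec rho T" and "om \<equiv> omega_vec rho T"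
      and "G \<equiv> GammaT rho T" and "x \<equiv> rho * T"
  shows
   "((\<lambda>k. nu (2*k+2) \<bullet> (G (2*k+2) *\<^sub>v nu (2*k+2))) \<longlongrightarrow>
       (2 * exp (6*x) * (3*x + 5) + exp (3*x) + 3*x + 7) / (54 * exp (6*x) + 27)) sequentially \<and>
    ((\<lambda>k. om (2*k+2) \<bullet> ((G (2*k+2) - transpose_mat (G (2*k+2))) *\<^sub>v nu (2*k+2))) \<longlongrightarrow>
       (4 * exp (6*x) - 6 * exp (5*x) + exp (3*x) - 3 * exp (-x) + 4) / (6 * exp (6*x) + 3)) sequentially \<and>
    ((\<lambda>k. om (2*k+2) \<bullet> (G (2*k+2) *\<^sub>v om (2*k+2))) \<longlongrightarrow>
       exp (-x) + x + 1) sequentially \<and>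
    ((\<lambda>k. nu (2*k+3) \<bullet> (G (2*k+3) *\<^sub>v nu (2*k+3))) \<longlongrightarrow>
       (2 * exp (6*x) * (3*x + 5) - 3 * exp (3*x) - 3*x - 7) / (54 * exp (6*x) - 27)) sequentially \<and>
    ((\<lambda>k. om (2*k+3) \<bullet> ((G (2*k+3) - transpose_mat (G (2*k+3))) *\<^sub>v nu (2*k+3))) \<longlongrightarrow>
       (- 4 * exp (6*x) - 6 * exp (5*x) + 3 * exp (3*x) + 3 * exp (-x) + 4) / (- 6 * exp (6*x) + 3)) sequentially \<and>
    ((\<lambda>k. om (2*k+3) \<bullet> (G (2*k+3) *\<^sub>v om (2*k+3))) \<longlongrightarrow>
       - exp (-x) + x + 1) sequentially"
proof -
  have "x > 0" using assms(1,2) by (simp add: x_def)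
  note forms = quadratic_forms_tendsto[OF assms(1,2), folded x_def]
  from tendsto_parity_subseq[where L = "\<lambda>\<sigma>. nu_sum_limit x (- \<sigma>) / 3", OF forms(1)]
    tendsto_parity_subseq[where L = "\<lambda>\<sigma>. 3 * nu_sum_limit x (- \<sigma>) - (x + 1 + \<sigma> * exp (-x))", OF forms(2)]
    tendsto_parity_subseq[where L = "\<lambda>\<sigma>. x + 1 + \<sigma> * exp (-x)", OF forms(3)]
  show ?thesis
    unfolding nu_def om_def G_def nu_sum_limit_values[OF \<open>x > 0\<close>] by (simp add: algebra_simps)
qed

end
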